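(* Let $p\in(\tfrac12,1)$, $d=p/(1-p)$ (so $d>1$), $c_0>0$, $c_1=0$, $\beta_0\in\mathbb{R}$ and $\beta_1>0$, and assume $-1<\theta_l<\theta_h<1$ where $\theta_l=\frac{-\sqrt{2c_0}-\beta_1}{d+1}$ and $\theta_h=\frac{\sqrt{2c_0}-\beta_1}{d+1}$. For each $N$, let $G_N$ denote the expected gain $\mathbb{E}\big[\bar\varepsilon_1^2-\beta_1^2+2\beta_1\bar\varepsilon_0-\bar\varepsilon_0^2\ \big|\ \mathcal P_N\big]$ of an agent with $x=1$ from reporting $r=0$ instead of $r=1$, conditional on the pivotal event $\mathcal P_N=\{\bar\varepsilon_1-\bar\varepsilon_0\notin(-\sqrt{2c_0}-\beta_1,\ \sqrt{2c_0}-\beta_1)\}$ in which the estimated coefficient $b_1$ is nonzero. Then incentive compatibility is violated in the $N\to\infty$ limit (i.e. $\lim_{N\to\infty}G_N>0$) if and only if $$\beta_1<\frac{c_0}{\sqrt{2c_0}+\frac{2d}{d-1}}.$$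
   Context: Setting: an agent has a binary characteristic $x\in\{0,1\}$ and ideal action $f(x)=\beta_0+\beta_1x$. For each $x\in\{0,1\}$ a statistician obtains $N$ observations $y_x^n=f(x)+\varepsilon_x^n$, $n=1,\dots,N$, where all $\varepsilon_x^n$ are i.i.d. with $\varepsilon_x^n=-1$ with probability $p$ and $\varepsilon_x^n=d$ with probability $1-p$ (mean zero). Let $\bar\varepsilon_x=\frac1N\sum_{n=1}^N\varepsilon_x^n$. The statistician computes $(b_0,b_1)$ solving $\min_{b_0,b_1}\sum_{x=0,1}\sum_{n=1}^N(y_x^n-b_0-b_1x)^2+N c_0\mathbf{1}_{b_1\neq0}$, breaking ties in favor of $b_1\neq0$; then $b_1=\beta_1+\bar\varepsilon_1-\bar\varepsilon_0$ if $(\beta_1+\bar\varepsilon_1-\bar\varepsilon_0)^2\ge 2c_0$ and $b_1=0$ otherwise, and $b_0=\tfrac12(\bar y_0+\bar y_1-b_1)$ with $\bar y_x$ the sample means. Given report $r$, the action is $\hat f(r)=b_0+b_1r$ and the agent's payoff is $-(\hat f(r)-f(x))^2$. Incentive compatibility (at parameter $\beta$) requires $\mathbb{E}[\hat f(x)-f(x)]^2\le\mathbb{E}[\hat f(r)-f(x)]^2$ for all $x,r$; for $x=1,r=0$ its violation is equivalent to the conditional expected gain $G_N$ in the claim being strictly positive. *)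

theory Defs
  imports "HOL-Probability.Probability"
begin

text \<open>The noise ratio d = p/(1-p), so that the two-point noise has mean zero.\<close>
definition dval :: "real \<Rightarrow> real" where
  "dval p = p / (1 - p)"

definition noise_pmf :: "real \<Rightarrow> real pmf" where
  "noise_pmf p = map_pmf (\<lambda>b. if b then -1 else dval p) (bernoulli_pmf p)"

definition sample_pmf :: "real \<Rightarrow> nat \<Rightarrow> (nat \<Rightarrow> real) pmf" where
  "sample_pmf p N = Pi_pmf {..<N} 0 (\<lambda>_. noise_pmf p)"

text \<open>Joint law of the noise samples for x = 0 and x = 1 (independent).\<close>
definition joint_pmf :: "real \<Rightarrow> nat \<Rightarrow> ((nat \<Rightarrow> real) \<times> (nat \<Rightarrow> real)) pmf" where
  "joint_pmf p N = pair_pmf (sample_pmf p N) (sample_pmf p N)"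

definition sample_mean :: "nat \<Rightarrow> (nat \<Rightarrow> real) \<Rightarrow> real" where
  "sample_mean N e = (\<Sum>n<N. e n) / real N"

definition pivotal :: "real \<Rightarrow> real \<Rightarrow> nat \<Rightarrow> (nat \<Rightarrow> real) \<times> (nat \<Rightarrow> real) \<Rightarrow> bool" where
  "pivotal c0 beta1 N w =
     (let D = sample_mean N (snd w) - sample_mean N (fst w)
      in \<not> (- sqrt (2 * c0) - beta1 < D \<and> D < sqrt (2 * c0) - beta1))"

definition gain :: "real \<Rightarrow> nat \<Rightarrow> (nat \<Rightarrow> real) \<times> (nat \<Rightarrow> real) \<Rightarrow> real" where
  "gain beta1 N w =
     (let m0 = sample_mean N (fst w); m1 = sample_mean N (snd w)
      in m1\<^sup>2 - beta1\<^sup>2 + 2 * beta1 * m0 - m0\<^sup>2)"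

definition G :: "real \<Rightarrow> real \<Rightarrow> real \<Rightarrow> nat \<Rightarrow> real" where
  "G p c0 beta1 N =
     measure_pmf.expectation (joint_pmf p N)
        (\<lambda>w. if pivotal c0 beta1 N w then gain beta1 N w else 0)
     / measure_pmf.prob (joint_pmf p N) {w. pivotal c0 beta1 N w}"

end

theory Submission
  imports Defs "HOL-Real_Asymp.Real_Asymp"
begin

text \<open>Let \<open>K\<^sub>0, K\<^sub>1\<close> be the numbers of noise terms equal to \<open>-1\<close> in the two samples. They are
  independent \<open>Bin(N, p)\<close>, each sample mean is \<open>d - (d + 1) K / N\<close>, and the pivotal event reads
  \<open>K\<^sub>0 - K\<^sub>1 \<ge> N \<tau>\<close> or \<open>K\<^sub>0 - K\<^sub>1 \<le> -N \<tau>'\<close> with \<open>\<tau> = (\<surd>(2c\<^sub>0) - \<beta>\<^sub>1) / (d + 1) < \<tau>'\<close>.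

  Tilt the two binomials to \<open>Bin(N, u)\<close> and \<open>Bin(N, v)\<close> with \<open>u - v = max \<tau> 0\<close>, choosing \<open>u\<close> so
  that the two odds ratios multiply to one (the Lagrange condition for minimising relative entropy
  on the pivotal event). The true weight of \<open>(K\<^sub>0, K\<^sub>1)\<close> is then \<open>C\<^sub>N \<rho>\<^bsup>K\<^sub>0 - K\<^sub>1 - N (u - v)\<^esup>\<close>
  times its tilted weight, with \<open>\<rho> \<le> 1\<close>: on the upper branch it is at most \<open>C\<^sub>N\<close> times the tilted
  weight, while next to the tilted modes it is at least \<open>C\<^sub>N\<close> times a polynomial in \<open>1/N\<close>. The lower
  branch is dominated by its mirror image. Hoeffding's inequality for the tilted binomials therefore
  concentrates the conditional law of the sample means at the tilted means \<open>m\<^sub>0, m\<^sub>1\<close>, and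
  \<open>G\<^sub>N\<close> tends to the gain at \<open>(m\<^sub>0, m\<^sub>1)\<close>. In terms of the means the balance condition reads
  \<open>(d - 1) m\<^sub>0 m\<^sub>1 + d (m\<^sub>0 + m\<^sub>1) = 0\<close>; together with \<open>m\<^sub>1 - m\<^sub>0 = (d + 1) max \<tau> 0\<close> this
  determines the sign of the limiting gain.\<close>

section \<open>Reduction to binomial sums\<close>

definition bin_weight :: "nat \<Rightarrow> real \<Rightarrow> nat \<Rightarrow> real" where
  "bin_weight N r k = real (N choose k) * r ^ k * (1 - r) ^ (N - k)"

definition pair_weight :: "nat \<Rightarrow> real \<Rightarrow> real \<Rightarrow> nat \<times> nat \<Rightarrow> real" where
  "pair_weight N r0 r1 k = bin_weight N r0 (fst k) * bin_weight N r1 (snd k)"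

definition count_mean :: "real \<Rightarrow> nat \<Rightarrow> nat \<Rightarrow> real" where
  "count_mean p N k = (dval p * real N - (dval p + 1) * real k) / real N"

definition gain_at :: "real \<Rightarrow> real \<Rightarrow> real \<Rightarrow> real" where
  "gain_at b1 m0 m1 = m1\<^sup>2 - b1\<^sup>2 + 2 * b1 * m0 - m0\<^sup>2"

definition pivotal_at :: "real \<Rightarrow> real \<Rightarrow> real \<Rightarrow> real \<Rightarrow> bool" where
  "pivotal_at c0 b1 m0 m1 \<longleftrightarrow> \<not> (- sqrt (2 * c0) - b1 < m1 - m0 \<and> m1 - m0 < sqrt (2 * c0) - b1)"

definition odds_ratio :: "real \<Rightarrow> real \<Rightarrow> real" where
  "odds_ratio p q = p * (1 - q) / (q * (1 - p))"

lemma Pi_pmf_map_default: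
  assumes [simp]: "finite A"
  shows "Pi_pmf A dflt' (\<lambda>x. map_pmf f (g x)) =
     map_pmf (\<lambda>h x. if x \<in> A then f (h x) else dflt') (Pi_pmf A dflt g)"
proof -
  have "Pi_pmf A dflt' (\<lambda>x. map_pmf f (g x)) =
          Pi_pmf A dflt' (\<lambda>x. g x \<bind> (\<lambda>x. return_pmf (f x)))"
    by (simp add: map_pmf_def)
  also have "\<dots> = Pi_pmf A dflt g \<bind> (\<lambda>h. return_pmf (\<lambda>x. if x \<in> A then f (h x) else dflt'))"
    by (subst Pi_pmf_bind[where d' = dflt]) auto
  finally show ?thesis
    by (simp add: map_pmf_def)
qed

lemma sum_if_eq_card:
  fixes a b :: real
  assumes "finite A"
  shows "(\<Sum>n\<in>A. if P n then a else b) = b * real (card A) + (a - b) * real (card {n\<in>A. P n})"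
proof -
  have "(\<Sum>n\<in>A. if P n then a else b) = (\<Sum>n\<in>A. b + (if P n then a - b else 0))"
    by (intro sum.cong) auto
  also have "\<dots> = b * real (card A) + (a - b) * real (card {n\<in>A. P n})"
    using assms by (simp add: sum.distrib sum.inter_filter[symmetric] mult.commute)
  finally show ?thesis .
qed

lemma sample_mean_distr:
  assumes "0 \<le> p" "p \<le> 1"
  shows "map_pmf (sample_mean N) (sample_pmf p N) = map_pmf (count_mean p N) (binomial_pmf N p)"
proof -
  let ?coins = "Pi_pmf {..<N} False (\<lambda>_. bernoulli_pmf p)"
  let ?noise = "\<lambda>h x. if x \<in> {..<N} then if h x then -1 else dval p else 0"
  have "sample_pmf p N = map_pmf ?noise ?coins"
    unfolding sample_pmf_def noise_pmf_def by (rule Pi_pmf_map_default) simp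
  moreover have "sample_mean N (?noise h) = count_mean p N (card {n\<in>{..<N}. h n})" for h
  proof -
    have "(\<Sum>x<N. ?noise h x) = (\<Sum>x<N. if h x then -1 else dval p)"
      by (intro sum.cong) auto
    then show ?thesis
      unfolding sample_mean_def count_mean_def by (simp add: sum_if_eq_card algebra_simps)
  qed
  ultimately have "map_pmf (sample_mean N) (sample_pmf p N) =
      map_pmf (count_mean p N) (map_pmf (\<lambda>h. card {n\<in>{..<N}. h n}) ?coins)"
    by (simp add: pmf.map_comp o_def)
  also have "map_pmf (\<lambda>h. card {n\<in>{..<N}. h n}) ?coins = binomial_pmf N p"
    by (rule binomial_pmf_altdef'[symmetric]) (use assms in auto)
  finally show ?thesis .
qed

lemma expectation_sample_means:
  assumes "0 \<le> p" "p \<le> 1"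
  shows "measure_pmf.expectation (joint_pmf p N) (\<lambda>w. F (sample_mean N (fst w)) (sample_mean N (snd w)))
    = (\<Sum>k\<in>{..N} \<times> {..N}. pair_weight N p p k *
          F (count_mean p N (fst k)) (count_mean p N (snd k)))"
proof -
  let ?S = "sample_pmf p N" and ?B = "binomial_pmf N p"
  have "measure_pmf.expectation (joint_pmf p N) (\<lambda>w. F (sample_mean N (fst w)) (sample_mean N (snd w)))
     = measure_pmf.expectation (map_pmf (map_prod (sample_mean N) (sample_mean N)) (pair_pmf ?S ?S))
         (\<lambda>m. F (fst m) (snd m))"
    unfolding joint_pmf_def by simp
  also have "map_pmf (map_prod (sample_mean N) (sample_mean N)) (pair_pmf ?S ?S)
      = map_pmf (map_prod (count_mean p N) (count_mean p N)) (pair_pmf ?B ?B)"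
    by (simp only: map_prod_def map_pair sample_mean_distr[OF assms])
  also have "measure_pmf.expectation \<dots> (\<lambda>m. F (fst m) (snd m)) =
     measure_pmf.expectation (pair_pmf ?B ?B) (\<lambda>k. F (count_mean p N (fst k)) (count_mean p N (snd k)))"
    by simp
  also have "\<dots> = (\<Sum>k\<in>{..N} \<times> {..N}. F (count_mean p N (fst k)) (count_mean p N (snd k)) * pmf (pair_pmf ?B ?B) k)"
    by (rule integral_measure_pmf_real) (use assms in \<open>auto simp: set_pmf_binomial_eq split: if_splits\<close>)
  finally show ?thesis
    using assms by (auto simp: pmf_pair pair_weight_def bin_weight_def mult_ac intro!: sum.cong)
qed

lemma G_eq_sums:
  fixes c0 b1 :: real and N :: nat
  assumes "0 \<le> p" "p \<le> 1"
  defines "Piv \<equiv> {k\<in>{..N} \<times> {..N}. pivotal_at c0 b1 (count_mean p N (fst k)) (count_mean p N (snd k))}"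
  shows "G p c0 b1 N =
    (\<Sum>k\<in>Piv. pair_weight N p p k * gain_at b1 (count_mean p N (fst k)) (count_mean p N (snd k))) /
    (\<Sum>k\<in>Piv. pair_weight N p p k)"
proof -
  have piv: "pivotal c0 b1 N w \<longleftrightarrow> pivotal_at c0 b1 (sample_mean N (fst w)) (sample_mean N (snd w))" for w
    by (simp add: pivotal_def pivotal_at_def Let_def)
  have gain_eq: "gain b1 N w = gain_at b1 (sample_mean N (fst w)) (sample_mean N (snd w))" for w
    by (simp add: gain_def gain_at_def Let_def)
  have "(\<lambda>w. if pivotal c0 b1 N w then 1 else 0 :: real) = indicator {w. pivotal c0 b1 N w}"
    by (auto simp: fun_eq_iff)
  then have "measure_pmf.prob (joint_pmf p N) {w. pivotal c0 b1 N w}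
      = measure_pmf.expectation (joint_pmf p N) (\<lambda>w. if pivotal c0 b1 N w then 1 else 0)"
    by simp
  also have "\<dots> = (\<Sum>k\<in>{..N} \<times> {..N}. pair_weight N p p k *
      (if pivotal_at c0 b1 (count_mean p N (fst k)) (count_mean p N (snd k)) then 1 else 0))"
    using expectation_sample_means[OF assms(1,2), where N = N and F = "\<lambda>m0 m1. if pivotal_at c0 b1 m0 m1 then 1 else 0"]
    by (simp add: piv)
  finally have den: "measure_pmf.prob (joint_pmf p N) {w. pivotal c0 b1 N w} = \<dots>" .
  have num: "measure_pmf.expectation (joint_pmf p N) (\<lambda>w. if pivotal c0 b1 N w then gain b1 N w else 0)
      = (\<Sum>k\<in>{..N} \<times> {..N}. pair_weight N p p k *
          (if pivotal_at c0 b1 (count_mean p N (fst k)) (count_mean p N (snd k))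
           then gain_at b1 (count_mean p N (fst k)) (count_mean p N (snd k)) else 0))"
    using expectation_sample_means[OF assms(1,2),
        where N = N and F = "\<lambda>m0 m1. if pivotal_at c0 b1 m0 m1 then gain_at b1 m0 m1 else 0"]
    unfolding piv gain_eq by simp
  show ?thesis
    unfolding G_def num den Piv_def by (simp add: sum.inter_filter if_distrib cong: if_cong)
qed

section \<open>Binomial weights\<close>

lemma bin_weight_nonneg: "0 \<le> r \<Longrightarrow> r \<le> 1 \<Longrightarrow> 0 \<le> bin_weight N r k"
  unfolding bin_weight_def by simp

lemma bin_weight_pos: "0 < r \<Longrightarrow> r < 1 \<Longrightarrow> k \<le> N \<Longrightarrow> 0 < bin_weight N r k"
  unfolding bin_weight_def by simp

lemma sum_bin_weight: "(\<Sum>k\<le>N. bin_weight N r k) = 1"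
proof -
  have "(\<Sum>k\<le>N. bin_weight N r k) = (r + (1 - r)) ^ N"
    unfolding binomial_ring bin_weight_def by (simp add: mult_ac)
  then show ?thesis by simp
qed

lemma bin_weight_Suc:
  assumes "k < N"
  shows "bin_weight N r (Suc k) * (real (Suc k) * (1 - r)) = bin_weight N r k * (real (N - k) * r)"
proof -
  have "Suc k * (N choose Suc k) = (N - k) * (N choose k)"
    by (metis binomial_absorb_comp binomial_absorption)
  then have choose: "real (Suc k) * real (N choose Suc k) = real (N - k) * real (N choose k)"
    by (metis of_nat_mult)
  have "N - k = Suc (N - Suc k)"
    using assms by simp
  then have "(1 - r) ^ (N - k) = (1 - r) ^ (N - Suc k) * (1 - r)"
    by simp
  then show ?thesis
    unfolding bin_weight_def using choose by (simp add: mult_ac)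
qed

lemma bin_weight_tilt:
  assumes "0 < q" "q < 1" "p < 1" "k \<le> N"
  shows "bin_weight N p k = bin_weight N q k * ((1 - p) / (1 - q)) ^ N * odds_ratio p q ^ k"
proof -
  define A where "A = (1 - p) / (1 - q)"
  have N: "N = k + (N - k)"
    using assms by simp
  have "A * odds_ratio p q = ((1 - p) * (1 - q) * p) / ((1 - p) * (1 - q) * q)"
    by (simp add: A_def odds_ratio_def mult_ac)
  also have "\<dots> = p / q"
    using assms by (intro mult_divide_mult_cancel_left) simp
  finally have "A ^ N * odds_ratio p q ^ k = (p / q) ^ k * A ^ (N - k)"
    by (subst N) (metis power_add power_mult_distrib mult.commute mult.left_commute)
  then have "bin_weight N q k * A ^ N * odds_ratio p q ^ k
      = real (N choose k) * (q ^ k * (p / q) ^ k) * ((1 - q) ^ (N - k) * A ^ (N - k))"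
    unfolding bin_weight_def mult.assoc by (simp only: mult_ac)
  also have "q ^ k * (p / q) ^ k = p ^ k"
    using assms by (simp add: power_mult_distrib[symmetric])
  also have "(1 - q) ^ (N - k) * A ^ (N - k) = (1 - p) ^ (N - k)"
    using assms by (simp add: A_def power_mult_distrib[symmetric])
  finally have "bin_weight N q k * A ^ N * odds_ratio p q ^ k = bin_weight N p k"
    by (simp add: bin_weight_def mult.assoc)
  then show ?thesis
    by (simp add: A_def)
qed

lemma bin_weight_Suc_ge:
  assumes "0 < r" "r < 1" "k < N"
  shows "bin_weight N r k * (r / (real N * (1 - r))) \<le> bin_weight N r (Suc k)"
proof -
  have "bin_weight N r k * r \<le> bin_weight N r k * (real (N - k) * r)"
    using assms by (intro mult_left_mono) (auto intro: bin_weight_nonneg)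
  also have "\<dots> = bin_weight N r (Suc k) * (real (Suc k) * (1 - r))"
    using bin_weight_Suc[OF assms(3)] by simp
  also have "\<dots> \<le> bin_weight N r (Suc k) * (real N * (1 - r))"
    using assms by (intro mult_left_mono mult_right_mono) (auto intro: bin_weight_nonneg)
  finally show ?thesis
    using assms by (simp add: field_simps)
qed

lemma bin_weight_argmax_bounds:
  assumes "0 < r" "r < 1" "k \<le> N" and max: "\<And>j. j \<le> N \<Longrightarrow> bin_weight N r j \<le> bin_weight N r k"
  shows "real (N + 1) * r - 1 \<le> real k" "real k \<le> real (N + 1) * r"
proof -
  have pos: "0 < bin_weight N r k"
    using assms by (intro bin_weight_pos)
  show "real (N + 1) * r - 1 \<le> real k"
  proof (cases "k < N")
    case True
    have "bin_weight N r k * (real (N - k) * r) = bin_weight N r (Suc k) * (real (Suc k) * (1 - r))"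
      using bin_weight_Suc[OF True] by simp
    also have "\<dots> \<le> bin_weight N r k * (real (Suc k) * (1 - r))"
      using max[of "Suc k"] True assms by (intro mult_right_mono) auto
    finally have "real (N - k) * r \<le> real (Suc k) * (1 - r)"
      using pos by simp
    then show ?thesis
      using True by (simp add: of_nat_diff algebra_simps)
  next
    case False
    then have "k = N"
      using assms by simp
    moreover have "r * real N \<le> real N"
      using assms by (simp add: mult_left_le_one_le)
    ultimately show ?thesis
      using assms by (simp add: algebra_simps)
  qed
  show "real k \<le> real (N + 1) * r"
  proof (cases k)
    case (Suc j)
    then have j: "j < N"
      using assms by simp
    have "bin_weight N r k * (real (Suc j) * (1 - r)) = bin_weight N r j * (real (N - j) * r)"
      using bin_weight_Suc[OF j] Suc by simp
    also have "\<dots> \<le> bin_weight N r k * (real (N - j) * r)"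
      using max[of j] j assms by (intro mult_right_mono) auto
    finally have "real (Suc j) * (1 - r) \<le> real (N - j) * r"
      using pos by simp
    then show ?thesis
      using Suc j by (simp add: of_nat_diff algebra_simps)
  qed (use assms in simp)
qed

lemma bin_weight_mode:
  assumes "0 < r" "r < 1"
  obtains k where "k \<le> N" "1 / real (N + 1) \<le> bin_weight N r k"
    "real (N + 1) * r - 1 \<le> real k" "real k \<le> real (N + 1) * r"
proof -
  have "Max (bin_weight N r ` {..N}) \<in> bin_weight N r ` {..N}"
    by (intro Max_in) auto
  then obtain k where k: "k \<le> N" and k_max: "bin_weight N r k = Max (bin_weight N r ` {..N})"
    by (metis atMost_iff imageE)
  have max: "bin_weight N r j \<le> bin_weight N r k" if "j \<le> N" for j
    unfolding k_max using that by (intro Max_ge) auto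
  have "1 = (\<Sum>j\<le>N. bin_weight N r j)"
    by (simp add: sum_bin_weight)
  also have "\<dots> \<le> (\<Sum>j\<le>N. bin_weight N r k)"
    by (intro sum_mono max) auto
  finally have "1 / real (N + 1) \<le> bin_weight N r k"
    by (simp add: field_simps)
  with k bin_weight_argmax_bounds[OF assms k max] show ?thesis
    using that by blast
qed

lemma sum_bin_weight_dev_le:
  assumes "0 < r" "r < 1" "0 < N" "0 \<le> \<delta>"
  shows "(\<Sum>k\<in>{k\<in>{..N}. \<delta> \<le> \<bar>real k / real N - r\<bar>}. bin_weight N r k) \<le> 2 * exp (- 2 * real N * \<delta>\<^sup>2)"
proof -
  have "(\<Sum>k\<in>{k\<in>{..N}. \<delta> \<le> \<bar>real k / real N - r\<bar>}. bin_weight N r k)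
      = measure_pmf.prob (binomial_pmf N r) ({k. \<delta> \<le> \<bar>real k / real N - r\<bar>} \<inter> set_pmf (binomial_pmf N r))"
    using assms by (subst measure_measure_pmf_finite) (auto simp: bin_weight_def intro!: sum.cong)
  also have "\<dots> = measure_pmf.prob (binomial_pmf N r) {k. \<delta> \<le> \<bar>real k / real N - r\<bar>}"
    by (rule measure_Int_set_pmf)
  also have "\<dots> \<le> 2 * exp (real_of_int (- 2 * int N) * \<delta>\<^sup>2)"
    using assms by (intro binomial_distribution.prob_abs_ge') (auto simp: binomial_distribution_def)
  finally show ?thesis
    by simp
qed

lemma pair_weight_nonneg: "0 \<le> r0 \<Longrightarrow> r0 \<le> 1 \<Longrightarrow> 0 \<le> r1 \<Longrightarrow> r1 \<le> 1 \<Longrightarrow> 0 \<le> pair_weight N r0 r1 k"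
  unfolding pair_weight_def by (intro mult_nonneg_nonneg bin_weight_nonneg)

lemma sum_pair_weight_Times:
  "sum (pair_weight N r0 r1) (A \<times> B) = sum (bin_weight N r0) A * sum (bin_weight N r1) B"
  by (simp add: sum_product sum.cartesian_product pair_weight_def case_prod_beta)

lemma sum_Un_le:
  fixes f :: "'a \<Rightarrow> 'b::ordered_ab_group_add"
  assumes "finite A" "finite B" "\<And>x. x \<in> A \<inter> B \<Longrightarrow> 0 \<le> f x"
  shows "sum f (A \<union> B) \<le> sum f A + sum f B"
  using sum_Un[OF assms(1,2), of f] sum_nonneg[of "A \<inter> B" f] assms(3) by simp

lemma sum_pair_weight_dev_le:
  assumes "0 < r0" "r0 < 1" "0 < r1" "r1 < 1" "0 < N" "0 \<le> \<delta>"
  shows "(\<Sum>k\<in>{k\<in>{..N} \<times> {..N}. \<delta> \<le> \<bar>real (fst k) / real N - r0\<bar> \<or> \<delta> \<le> \<bar>real (snd k) / real N - r1\<bar>}.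
            pair_weight N r0 r1 k) \<le> 4 * exp (- 2 * real N * \<delta>\<^sup>2)"
proof -
  define S0 where "S0 = {k\<in>{..N}. \<delta> \<le> \<bar>real k / real N - r0\<bar>}"
  define S1 where "S1 = {k\<in>{..N}. \<delta> \<le> \<bar>real k / real N - r1\<bar>}"
  have "{k\<in>{..N} \<times> {..N}. \<delta> \<le> \<bar>real (fst k) / real N - r0\<bar> \<or> \<delta> \<le> \<bar>real (snd k) / real N - r1\<bar>}
      = S0 \<times> {..N} \<union> {..N} \<times> S1"
    unfolding S0_def S1_def by auto
  moreover have "sum (pair_weight N r0 r1) (S0 \<times> {..N} \<union> {..N} \<times> S1)
      \<le> sum (pair_weight N r0 r1) (S0 \<times> {..N}) + sum (pair_weight N r0 r1) ({..N} \<times> S1)"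
    using assms by (intro sum_Un_le pair_weight_nonneg) (auto simp: S0_def S1_def)
  moreover have "sum (bin_weight N r0) S0 \<le> 2 * exp (- 2 * real N * \<delta>\<^sup>2)"
    unfolding S0_def using assms by (intro sum_bin_weight_dev_le)
  moreover have "sum (bin_weight N r1) S1 \<le> 2 * exp (- 2 * real N * \<delta>\<^sup>2)"
    unfolding S1_def using assms by (intro sum_bin_weight_dev_le)
  ultimately show ?thesis
    by (simp add: sum_pair_weight_Times sum_bin_weight)
qed

lemma weighted_mean_dev_le:
  fixes u g :: "'a \<Rightarrow> real"
  assumes "finite A" and u: "\<And>x. x \<in> A \<Longrightarrow> 0 \<le> u x" and S: "0 < sum u A"
    and near: "\<And>x. x \<in> A - F \<Longrightarrow> \<bar>g x - c\<bar> \<le> e" and all: "\<And>x. x \<in> A \<Longrightarrow> \<bar>g x - c\<bar> \<le> B"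
    and "0 \<le> e"
  shows "\<bar>(\<Sum>x\<in>A. u x * g x) / sum u A - c\<bar> \<le> e + B * sum u (A \<inter> F) / sum u A"
proof -
  have "\<bar>(\<Sum>x\<in>A. u x * g x) - c * sum u A\<bar> = \<bar>\<Sum>x\<in>A. u x * (g x - c)\<bar>"
    by (simp add: right_diff_distrib sum_subtractf sum_distrib_left mult_ac)
  also have "\<dots> \<le> (\<Sum>x\<in>A. u x * \<bar>g x - c\<bar>)"
    by (rule order_trans[OF sum_abs]) (simp add: abs_mult u)
  also have "\<dots> = (\<Sum>x\<in>A \<inter> F. u x * \<bar>g x - c\<bar>) + (\<Sum>x\<in>A - F. u x * \<bar>g x - c\<bar>)"
    using assms(1) by (rule sum.Int_Diff)
  also have "\<dots> \<le> (\<Sum>x\<in>A \<inter> F. u x * B) + (\<Sum>x\<in>A - F. u x * e)"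
    using assms by (intro add_mono sum_mono mult_left_mono) auto
  also have "\<dots> \<le> (\<Sum>x\<in>A \<inter> F. u x * B) + (\<Sum>x\<in>A. u x * e)"
    using assms by (intro add_left_mono sum_mono2) auto
  finally have "\<bar>(\<Sum>x\<in>A. u x * g x) - c * sum u A\<bar> \<le> sum u (A \<inter> F) * B + sum u A * e"
    by (simp add: sum_distrib_right)
  then show ?thesis
    using S by (simp add: abs_divide pos_divide_le_eq diff_divide_eq_iff add_divide_distrib[symmetric] field_simps)
qed

section \<open>The gain function\<close>

lemma gain_at_lipschitz:
  fixes d b1 m0 m1 y x :: real
  assumes "1 \<le> d" "0 \<le> b1" "-1 \<le> m0" "m0 \<le> d" "-1 \<le> m1" "m1 \<le> d" "-1 \<le> y" "y \<le> d" "-1 \<le> x" "x \<le> d"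
  shows "\<bar>gain_at b1 m0 m1 - gain_at b1 y x\<bar> \<le> (2 * d + 2 * b1) * \<bar>m0 - y\<bar> + 2 * d * \<bar>m1 - x\<bar>"
proof -
  have "gain_at b1 m0 m1 - gain_at b1 y x = (m1 - x) * (m1 + x) + 2 * b1 * (m0 - y) - (m0 - y) * (m0 + y)"
    unfolding gain_at_def by (simp add: power2_eq_square algebra_simps)
  moreover have "\<bar>(m1 - x) * (m1 + x)\<bar> \<le> \<bar>m1 - x\<bar> * (2 * d)" "\<bar>(m0 - y) * (m0 + y)\<bar> \<le> \<bar>m0 - y\<bar> * (2 * d)"
    unfolding abs_mult using assms by (intro mult_left_mono; simp)+
  moreover have "\<bar>2 * b1 * (m0 - y)\<bar> = 2 * b1 * \<bar>m0 - y\<bar>"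
    using assms by (simp add: abs_mult)
  ultimately show ?thesis
    by (simp add: algebra_simps) (smt (verit))
qed

lemma gain_at_pos_iff:
  fixes d s b1 x y :: real
  assumes d: "1 < d" and s: "0 < s" and b1: "0 < b1" and xy: "x - y = s - b1"
    and x: "-1 \<le> x" and y: "-1 \<le> y" and balanced: "(d - 1) * x * y + d * (x + y) = 0"
  shows "0 < gain_at b1 y x \<longleftrightarrow> b1 < (s\<^sup>2 / 2) / (s + 2 * d / (d - 1))"
proof -
  define S where "S = x + y"
  have x_eq: "x = y + s - b1"
    using xy by simp
  have "gain_at b1 y x = s * (S - b1)"
    unfolding gain_at_def S_def x_eq by (simp add: power2_eq_square algebra_simps)
  then have "0 < gain_at b1 y x \<longleftrightarrow> b1 < S"
    using s by (simp add: zero_less_mult_iff)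
  text \<open>\<open>S\<close> is a root of \<open>\<phi>\<close>, which is increasing on \<open>[-2, \<infinity>)\<close>; so \<open>S > b1\<close> iff \<open>\<phi> b1 < 0\<close>.\<close>
  define \<phi> where "\<phi> S' = (d - 1) * (S'\<^sup>2 - (s - b1)\<^sup>2) / 4 + d * S'" for S'
  have "\<phi> S = (d - 1) * x * y + d * (x + y)"
    unfolding \<phi>_def S_def xy[symmetric] by (simp add: power2_eq_square field_simps)
  then have "\<phi> S = 0"
    using balanced by simp
  moreover have "\<phi> S - \<phi> b1 = (S - b1) * ((d - 1) * (S + b1) / 4 + d)"
    unfolding \<phi>_def by (simp add: power2_eq_square field_simps)
  moreover have "0 < (d - 1) * (S + b1) / 4 + d"
  proof -
    have "(d - 1) * (-2) \<le> (d - 1) * (S + b1)"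
      using d x y b1 unfolding S_def by (intro mult_left_mono) auto
    then show ?thesis
      using d by simp
  qed
  ultimately have "b1 < S \<longleftrightarrow> \<phi> b1 < 0"
    by (smt (verit) mult_pos_pos mult_neg_pos)
  also have "\<phi> b1 = (b1 * ((d - 1) * s + 2 * d) - (d - 1) * (s\<^sup>2 / 2)) / 2"
    unfolding \<phi>_def by (simp add: power2_eq_square field_simps)
  also have "\<dots> < 0 \<longleftrightarrow> b1 * (s + 2 * d / (d - 1)) < s\<^sup>2 / 2"
    using d by (simp add: field_simps)
  also have "\<dots> \<longleftrightarrow> b1 < (s\<^sup>2 / 2) / (s + 2 * d / (d - 1))"
    using d s by (intro pos_less_divide_eq[symmetric] add_pos_pos divide_pos_pos) auto
  finally show ?thesis
    using \<open>0 < gain_at b1 y x \<longleftrightarrow> b1 < S\<close> by simp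
qed

section \<open>Exponential tilting of the pivotal event\<close>

lemma balanced_tilt_exists:
  assumes "0 < p" "p < 1" "0 \<le> t" "t < 1"
  obtains u where "t < u" "u < 1" "odds_ratio p u * odds_ratio p (u - t) = 1"
proof -
  define F where "F u = u * (u - t) * (1 - p)\<^sup>2 - p\<^sup>2 * ((1 - u) * (1 - (u - t)))" for u
  have "F t < 0" "0 < F 1"
    using assms by (simp_all add: F_def)
  then obtain u where u: "t \<le> u" "u \<le> 1" "F u = 0"
    using IVT'[of F t 0 1] assms by (force simp: F_def intro!: continuous_intros)
  then have "t < u" "u < 1"
    using \<open>F t < 0\<close> \<open>0 < F 1\<close> by (auto simp: order.order_iff_strict)
  moreover have "odds_ratio p u * odds_ratio p (u - t) = p\<^sup>2 * ((1 - u) * (1 - (u - t))) / (u * (u - t) * (1 - p)\<^sup>2)"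
    unfolding odds_ratio_def by (simp add: power2_eq_square mult_ac)
  moreover have "p\<^sup>2 * ((1 - u) * (1 - (u - t))) = u * (u - t) * (1 - p)\<^sup>2" "u * (u - t) * (1 - p)\<^sup>2 \<noteq> 0"
    using u(3) \<open>t < u\<close> assms by (auto simp: F_def)
  ultimately show ?thesis
    using that by simp
qed

lemma odds_ratio_antimono:
  assumes "0 < q" "q \<le> q'" "0 \<le> p" "p < 1"
  shows "odds_ratio p q' \<le> odds_ratio p q"
proof -
  have "(1 - q') / q' \<le> (1 - q) / q"
    using assms by (simp add: divide_simps) (simp add: algebra_simps mult_left_mono)
  then have "p / (1 - p) * ((1 - q') / q') \<le> p / (1 - p) * ((1 - q) / q)"
    using assms by (intro mult_left_mono) auto
  then show ?thesis
    by (simp add: odds_ratio_def mult.commute)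
qed

text \<open>\<open>u\<close> and \<open>v\<close> are the tilted probabilities of a noise term \<open>-1\<close> in the samples for \<open>x = 0\<close> and
  \<open>x = 1\<close>. The balance condition makes the likelihood ratio between the true and the tilted law
  depend on the two counts only through their difference (lemma \<open>tilt\<close>).\<close>
locale tilted_pivotal =
  fixes p c0 b1 u v :: real
  assumes p_gt: "1/2 < p" and p_lt: "p < 1" and c0_pos: "0 < c0" and b1_pos: "0 < b1"
    and v_pos: "0 < v" and u_lt: "u < 1"
    and shift: "u - v = max ((sqrt (2 * c0) - b1) / (dval p + 1)) 0"
    and balanced: "odds_ratio p u * odds_ratio p v = 1"
begin

definition d :: real where
  "d = dval p"

definition \<tau> :: real where
  "\<tau> = (sqrt (2 * c0) - b1) / (d + 1)"

definition \<tau>' :: real where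
  "\<tau>' = (sqrt (2 * c0) + b1) / (d + 1)"

definition \<rho> :: real where
  "\<rho> = odds_ratio p u"

definition tilt_const :: "nat \<Rightarrow> real" where
  "tilt_const N = ((1 - p) / (1 - u) * ((1 - p) / (1 - v))) ^ N * \<rho> powr (real N * (u - v))"

definition lim_mean0 :: real where
  "lim_mean0 = d - (d + 1) * u"

definition lim_mean1 :: real where
  "lim_mean1 = d - (d + 1) * v"

definition count_diff :: "nat \<times> nat \<Rightarrow> real" where
  "count_diff k = real (fst k) - real (snd k)"

definition piv :: "nat \<Rightarrow> (nat \<times> nat) set" where
  "piv N = {k \<in> {..N} \<times> {..N}. pivotal_at c0 b1 (count_mean p N (fst k)) (count_mean p N (snd k))}"

definition upper :: "nat \<Rightarrow> (nat \<times> nat) set" where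
  "upper N = {k \<in> {..N} \<times> {..N}. real N * \<tau> \<le> count_diff k}"

definition lower :: "nat \<Rightarrow> (nat \<times> nat) set" where
  "lower N = {k \<in> {..N} \<times> {..N}. count_diff k \<le> - (real N * \<tau>')}"

definition far :: "nat \<Rightarrow> real \<Rightarrow> (nat \<times> nat) set" where
  "far N \<delta> = {k. \<delta> \<le> \<bar>real (fst k) / real N - u\<bar> \<or> \<delta> \<le> \<bar>real (snd k) / real N - v\<bar>}"

lemma d_gt1: "1 < d"
  unfolding d_def dval_def using p_gt p_lt by (simp add: field_simps)

lemma shift_eq: "u - v = max \<tau> 0"
  using shift unfolding \<tau>_def d_def .

lemma v_le_u: "v \<le> u"
  using shift_eq by simp

lemma u_pos: "0 < u"
  using v_pos v_le_u by simp

lemma v_lt: "v < 1"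
  using u_lt v_le_u by simp

lemma shift_lt_\<tau>': "u - v < \<tau>'"
proof -
  have "sqrt (2 * c0) - b1 < sqrt (2 * c0) + b1" "0 < sqrt (2 * c0) + b1"
    using b1_pos c0_pos by (auto intro: add_nonneg_pos)
  then show ?thesis
    unfolding shift_eq \<tau>_def \<tau>'_def using d_gt1 by (auto intro: divide_strict_right_mono)
qed

lemma \<rho>_pos: "0 < \<rho>"
  unfolding \<rho>_def odds_ratio_def using p_gt p_lt u_pos u_lt by simp

lemma \<rho>_le1: "\<rho> \<le> 1"
proof -
  have "\<rho> * \<rho> \<le> \<rho> * odds_ratio p v"
    unfolding \<rho>_def using \<rho>_pos p_gt p_lt v_pos v_le_u
    by (intro mult_left_mono odds_ratio_antimono) (auto simp: \<rho>_def)
  then have "\<rho> * \<rho> \<le> 1"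
    using balanced unfolding \<rho>_def by simp
  then show ?thesis
    using less_1_mult[of \<rho> \<rho>] by linarith
qed

lemma \<rho>_eq1: "\<tau> \<le> 0 \<Longrightarrow> \<rho> = 1"
proof -
  assume "\<tau> \<le> 0"
  then have "\<rho> * \<rho> = 1"
    using balanced shift_eq unfolding \<rho>_def by simp
  then show "\<rho> = 1"
    using \<rho>_le1 \<rho>_pos mult_strict_left_mono[of \<rho> 1 \<rho>] by linarith
qed

lemma tilt:
  assumes "k \<in> {..N} \<times> {..N}"
  shows "pair_weight N p p k = tilt_const N * \<rho> powr (count_diff k - real N * (u - v)) * pair_weight N u v k"
proof -
  obtain k0 k1 where k: "k = (k0, k1)" "k0 \<le> N" "k1 \<le> N"
    using assms by auto
  have w0: "bin_weight N p k0 = bin_weight N u k0 * ((1 - p) / (1 - u)) ^ N * \<rho> ^ k0"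
    unfolding \<rho>_def using p_lt u_pos u_lt k by (intro bin_weight_tilt) auto
  have "odds_ratio p v = 1 / \<rho>"
    using balanced \<rho>_pos unfolding \<rho>_def by (simp add: field_simps)
  then have w1: "bin_weight N p k1 = bin_weight N v k1 * ((1 - p) / (1 - v)) ^ N * (1 / \<rho>) ^ k1"
    using p_lt v_pos v_lt k by (metis bin_weight_tilt)
  have powr_eq: "\<rho> ^ k0 * (1 / \<rho>) ^ k1 = \<rho> powr (real N * (u - v)) * \<rho> powr (count_diff k - real N * (u - v))"
    using \<rho>_pos by (simp add: k count_diff_def powr_add[symmetric] powr_diff powr_realpow power_one_over)
  have "pair_weight N p p k
      = ((1 - p) / (1 - u)) ^ N * ((1 - p) / (1 - v)) ^ N * (\<rho> ^ k0 * (1 / \<rho>) ^ k1) * pair_weight N u v k"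
    unfolding k pair_weight_def fst_conv snd_conv w0 w1 by (simp only: mult_ac)
  then show ?thesis
    unfolding tilt_const_def power_mult_distrib powr_eq by (simp only: mult_ac)
qed

lemma count_mean_eq: "0 < N \<Longrightarrow> count_mean p N k = d - (d + 1) * (real k / real N)"
  unfolding count_mean_def d_def by (simp add: field_simps)

lemma piv_eq:
  assumes "0 < N"
  shows "piv N = upper N \<union> lower N"
proof -
  have "pivotal_at c0 b1 (count_mean p N (fst k)) (count_mean p N (snd k))
      \<longleftrightarrow> real N * \<tau> \<le> count_diff k \<or> count_diff k \<le> - (real N * \<tau>')" for k
  proof -
    have "count_mean p N (snd k) - count_mean p N (fst k) = (d + 1) * (count_diff k / real N)"
      using assms by (simp add: count_mean_eq count_diff_def algebra_simps diff_divide_distrib)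
    moreover have "sqrt (2 * c0) - b1 = (d + 1) * \<tau>" "- sqrt (2 * c0) - b1 = (d + 1) * (- \<tau>')"
      unfolding \<tau>_def \<tau>'_def using d_gt1 by (simp_all add: field_simps)
    ultimately have "pivotal_at c0 b1 (count_mean p N (fst k)) (count_mean p N (snd k))
        \<longleftrightarrow> \<not> (- \<tau>' < count_diff k / real N \<and> count_diff k / real N < \<tau>)"
      unfolding pivotal_at_def using d_gt1 by (simp only: mult_less_cancel_left_pos)
    also have "\<dots> \<longleftrightarrow> real N * \<tau> \<le> count_diff k \<or> count_diff k \<le> - (real N * \<tau>')"
      using assms by (auto simp: divide_less_eq less_divide_eq mult.commute)
    finally show ?thesis .
  qed
  then show ?thesis
    unfolding piv_def upper_def lower_def by auto
qed

lemma count_mean_range: "0 < N \<Longrightarrow> k \<le> N \<Longrightarrow> -1 \<le> count_mean p N k \<and> count_mean p N k \<le> d"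
proof -
  assume N: "0 < N" "k \<le> N"
  have "0 \<le> real k / real N" "real k / real N \<le> 1"
    using N by auto
  then have "0 \<le> (d + 1) * (real k / real N)" "(d + 1) * (real k / real N) \<le> d + 1"
    using d_gt1 mult_left_mono[of "real k / real N" 1 "d + 1"] by simp_all
  then show ?thesis
    unfolding count_mean_eq[OF N(1)] by linarith
qed

lemma lim_means_range: "-1 \<le> lim_mean0" "lim_mean0 \<le> d" "-1 \<le> lim_mean1" "lim_mean1 \<le> d"
proof -
  have "(d + 1) * u \<le> (d + 1) * 1" "(d + 1) * v \<le> (d + 1) * 1" "0 \<le> (d + 1) * u" "0 \<le> (d + 1) * v"
    using d_gt1 u_pos u_lt v_pos v_lt by (auto intro!: mult_left_mono mult_nonneg_nonneg)
  then show "-1 \<le> lim_mean0" "lim_mean0 \<le> d" "-1 \<le> lim_mean1" "lim_mean1 \<le> d"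
    unfolding lim_mean0_def lim_mean1_def by auto
qed

lemma count_mean_dist:
  assumes "0 < N"
  shows "\<bar>count_mean p N k - lim_mean0\<bar> = (d + 1) * \<bar>real k / real N - u\<bar>"
    and "\<bar>count_mean p N k - lim_mean1\<bar> = (d + 1) * \<bar>real k / real N - v\<bar>"
proof -
  have "count_mean p N k - lim_mean0 = - ((d + 1) * (real k / real N - u))"
    "count_mean p N k - lim_mean1 = - ((d + 1) * (real k / real N - v))"
    unfolding count_mean_eq[OF assms] lim_mean0_def lim_mean1_def by (simp_all add: algebra_simps)
  then show "\<bar>count_mean p N k - lim_mean0\<bar> = (d + 1) * \<bar>real k / real N - u\<bar>"
    "\<bar>count_mean p N k - lim_mean1\<bar> = (d + 1) * \<bar>real k / real N - v\<bar>"
    using d_gt1 by (simp_all add: abs_mult)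
qed

definition lip :: real where
  "lip = (4 * d + 2 * b1) * (d + 1)"

lemma lip_pos: "0 < lip"
  unfolding lip_def using d_gt1 b1_pos by simp

lemma gain_close:
  assumes N: "0 < N" "k0 \<le> N" "k1 \<le> N"
    and "\<bar>real k0 / real N - u\<bar> \<le> \<delta>" "\<bar>real k1 / real N - v\<bar> \<le> \<delta>"
  shows "\<bar>gain_at b1 (count_mean p N k0) (count_mean p N k1) - gain_at b1 lim_mean0 lim_mean1\<bar> \<le> lip * \<delta>"
proof -
  have "\<bar>gain_at b1 (count_mean p N k0) (count_mean p N k1) - gain_at b1 lim_mean0 lim_mean1\<bar>
      \<le> (2 * d + 2 * b1) * \<bar>count_mean p N k0 - lim_mean0\<bar> + 2 * d * \<bar>count_mean p N k1 - lim_mean1\<bar>"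
    using d_gt1 b1_pos count_mean_range[OF N(1,2)] count_mean_range[OF N(1,3)] lim_means_range
    by (intro gain_at_lipschitz) auto
  also have "\<dots> \<le> (2 * d + 2 * b1) * ((d + 1) * \<delta>) + 2 * d * ((d + 1) * \<delta>)"
    unfolding count_mean_dist[OF N(1)] using assms d_gt1 b1_pos by (intro add_mono mult_left_mono) auto
  also have "\<dots> = lip * \<delta>"
    unfolding lip_def by (simp add: algebra_simps)
  finally show ?thesis .
qed

lemma tilt_const_pos: "0 < tilt_const N"
  unfolding tilt_const_def using p_lt u_lt v_lt \<rho>_pos by simp

lemma weight_p_nonneg: "0 \<le> pair_weight N p p k"
  using p_gt p_lt by (intro pair_weight_nonneg) auto

lemma weight_uv_nonneg: "0 \<le> pair_weight N u v k"
  using u_pos u_lt v_pos v_lt by (intro pair_weight_nonneg) auto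

text \<open>On the upper branch the tilting factor \<open>\<rho> powr (count_diff k - N (u - v))\<close> is at most 1.\<close>
lemma sum_upper_far_le:
  assumes "0 < N" "0 \<le> \<delta>"
  shows "sum (pair_weight N p p) (upper N \<inter> far N \<delta>) \<le> tilt_const N * (4 * exp (- 2 * real N * \<delta>\<^sup>2))"
proof -
  have "pair_weight N p p k \<le> tilt_const N * pair_weight N u v k" if "k \<in> upper N" for k
  proof -
    have "\<rho> powr (count_diff k - real N * (u - v)) \<le> 1"
    proof (cases "\<tau> \<le> 0")
      case False
      then have "0 \<le> count_diff k - real N * (u - v)"
        using that shift_eq by (simp add: upper_def)
      then show ?thesis
        using \<rho>_pos \<rho>_le1 powr_mono'[of 0 "count_diff k - real N * (u - v)" \<rho>] by simp
    qed (simp add: \<rho>_eq1)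
    then show ?thesis
      using that tilt[of k N] tilt_const_pos[of N] weight_uv_nonneg[of N k]
      by (auto simp: upper_def intro: mult_left_le_one_le)
  qed
  then have "sum (pair_weight N p p) (upper N \<inter> far N \<delta>) \<le> tilt_const N * sum (pair_weight N u v) (upper N \<inter> far N \<delta>)"
    by (auto simp: sum_distrib_left intro!: sum_mono)
  also have "sum (pair_weight N u v) (upper N \<inter> far N \<delta>)
      \<le> sum (pair_weight N u v) {k\<in>{..N} \<times> {..N}. \<delta> \<le> \<bar>real (fst k) / real N - u\<bar> \<or> \<delta> \<le> \<bar>real (snd k) / real N - v\<bar>}"
    by (intro sum_mono2 weight_uv_nonneg) (auto simp: upper_def far_def)
  also have "\<dots> \<le> 4 * exp (- 2 * real N * \<delta>\<^sup>2)"
    using assms u_pos u_lt v_pos v_lt by (intro sum_pair_weight_dev_le)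
  finally show ?thesis
    using tilt_const_pos[of N] by (simp add: mult_left_mono)
qed

lemma swap_lower_subset:
  assumes "0 < N" "2 * \<delta> \<le> \<tau>' - (u - v)"
  shows "prod.swap ` lower N \<subseteq> upper N \<inter> far N \<delta>"
proof
  fix k assume "k \<in> prod.swap ` lower N"
  then obtain k0 k1 where k: "k = (k1, k0)" "k0 \<le> N" "k1 \<le> N" and J: "real N * \<tau>' \<le> real k1 - real k0"
    by (auto simp: lower_def count_diff_def)
  have "real N * \<tau> \<le> real N * \<tau>'"
    using shift_eq shift_lt_\<tau>' by (intro mult_left_mono) auto
  then have "k \<in> upper N"
    using k J by (simp add: upper_def count_diff_def)
  moreover have "k \<in> far N \<delta>"
  proof (rule ccontr)
    assume "k \<notin> far N \<delta>"
    then have "\<bar>real k1 / real N - u\<bar> < \<delta>" "\<bar>real k0 / real N - v\<bar> < \<delta>"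
      by (auto simp: far_def k)
    then have "(real k1 - real k0) / real N < \<tau>'"
      using assms by (simp add: diff_divide_distrib abs_less_iff)
    then show False
      using J assms by (simp add: pos_divide_less_eq mult.commute)
  qed
  ultimately show "k \<in> upper N \<inter> far N \<delta>"
    by simp
qed

lemma sum_piv_far_le:
  assumes "0 < N" "0 \<le> \<delta>" "2 * \<delta> \<le> \<tau>' - (u - v)"
  shows "sum (pair_weight N p p) (piv N \<inter> far N \<delta>) \<le> 8 * tilt_const N * exp (- 2 * real N * \<delta>\<^sup>2)"
proof -
  have fin: "finite (upper N)" "finite (lower N)"
    unfolding upper_def lower_def by auto
  have "sum (pair_weight N p p) (lower N) = sum (pair_weight N p p) (prod.swap ` lower N)"
    by (simp add: sum.reindex pair_weight_def o_def mult.commute)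
  also have "\<dots> \<le> sum (pair_weight N p p) (upper N \<inter> far N \<delta>)"
    using fin swap_lower_subset[OF assms(1,3)] by (intro sum_mono2 weight_p_nonneg) auto
  finally have lower_le: "sum (pair_weight N p p) (lower N) \<le> sum (pair_weight N p p) (upper N \<inter> far N \<delta>)" .
  have "piv N \<inter> far N \<delta> \<subseteq> (upper N \<inter> far N \<delta>) \<union> lower N"
    using piv_eq[OF assms(1)] by auto
  then have "sum (pair_weight N p p) (piv N \<inter> far N \<delta>) \<le> sum (pair_weight N p p) ((upper N \<inter> far N \<delta>) \<union> lower N)"
    using fin by (intro sum_mono2 weight_p_nonneg) auto
  also have "\<dots> \<le> sum (pair_weight N p p) (upper N \<inter> far N \<delta>) + sum (pair_weight N p p) (lower N)"
    using fin by (intro sum_Un_le weight_p_nonneg) auto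
  finally show ?thesis
    using lower_le sum_upper_far_le[OF assms(1,2)] by simp
qed

text \<open>Near the tilted means the tilting factor is at least \<open>\<rho>\<^sup>3\<close>, and the tilted weight of a point next
  to the two binomial modes is of order \<open>N\<^sup>-\<^sup>3\<close>.\<close>
lemma sum_piv_ge:
  assumes N: "0 < N" "real (N + 1) * u < real N"
  shows "tilt_const N * (\<rho> ^ 3 * u / ((1 - u) * (1 + real N) ^ 3)) \<le> sum (pair_weight N p p) (piv N)"
proof -
  obtain k0 where k0: "k0 \<le> N" "1 / real (N + 1) \<le> bin_weight N u k0"
      "real (N + 1) * u - 1 \<le> real k0" "real k0 \<le> real (N + 1) * u"
    using bin_weight_mode[OF u_pos u_lt] .
  obtain k1 where k1: "k1 \<le> N" "1 / real (N + 1) \<le> bin_weight N v k1"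
      "real (N + 1) * v - 1 \<le> real k1" "real k1 \<le> real (N + 1) * v"
    using bin_weight_mode[OF v_pos v_lt] .
  define k where "k = (Suc k0, k1)"
  have "k0 < N"
    using k0(4) N(2) by simp
  then have k_grid: "k \<in> {..N} \<times> {..N}"
    using k1 by (simp add: k_def)
  have "count_diff k = real k0 + 1 - real k1"
    by (simp add: k_def count_diff_def)
  moreover have "real (N + 1) * u - real (N + 1) * v = real N * (u - v) + (u - v)"
    by (simp add: algebra_simps)
  ultimately have "real N * (u - v) \<le> count_diff k" "count_diff k - real N * (u - v) \<le> 3"
    using k0(3,4) k1(3,4) v_le_u u_lt v_pos by linarith+
  moreover have "real N * \<tau> \<le> real N * (u - v)"
    using shift_eq by (intro mult_left_mono) auto
  ultimately have "k \<in> piv N"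
    using piv_eq[OF N(1)] k_grid by (simp add: upper_def)
  have "\<rho> powr 3 \<le> \<rho> powr (count_diff k - real N * (u - v))"
    using \<open>count_diff k - real N * (u - v) \<le> 3\<close> \<rho>_pos \<rho>_le1 by (intro powr_mono') auto
  then have "\<rho> ^ 3 \<le> \<rho> powr (count_diff k - real N * (u - v))"
    using \<rho>_pos by (simp add: powr_numeral)
  have "1 / real (N + 1) * (u / (real N * (1 - u))) \<le> bin_weight N u k0 * (u / (real N * (1 - u)))"
    using k0(2) u_pos u_lt by (intro mult_right_mono) auto
  also have "\<dots> \<le> bin_weight N u (Suc k0)"
    using bin_weight_Suc_ge[OF u_pos u_lt \<open>k0 < N\<close>] by this
  finally have "1 / real (N + 1) * (u / (real N * (1 - u))) \<le> bin_weight N u (Suc k0)" .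
  then have "1 / real (N + 1) * (u / (real N * (1 - u))) * (1 / real (N + 1)) \<le> pair_weight N u v k"
    unfolding k_def pair_weight_def using k1(2) u_pos u_lt N
    by (intro mult_mono) (auto intro: bin_weight_nonneg)
  moreover have "u / ((1 - u) * (1 + real N) ^ 3) \<le> u / ((1 - u) * (real N * (1 + real N) ^ 2))"
    using u_pos u_lt N by (intro divide_left_mono mult_left_mono) (auto simp: power2_eq_square power3_eq_cube)
  moreover have "u / ((1 - u) * (real N * (1 + real N) ^ 2)) = 1 / real (N + 1) * (u / (real N * (1 - u))) * (1 / real (N + 1))"
    by (simp add: power2_eq_square mult_ac)
  ultimately have "\<rho> ^ 3 * (u / ((1 - u) * (1 + real N) ^ 3)) \<le> \<rho> powr (count_diff k - real N * (u - v)) * pair_weight N u v k"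
    using \<open>\<rho> ^ 3 \<le> \<rho> powr _\<close> \<rho>_pos u_pos u_lt by (intro mult_mono) auto
  then have "tilt_const N * (\<rho> ^ 3 * u / ((1 - u) * (1 + real N) ^ 3)) \<le> pair_weight N p p k"
    unfolding tilt[OF k_grid] times_divide_eq_right[symmetric] mult.assoc
    using tilt_const_pos[of N] by (intro mult_left_mono) auto
  also have "\<dots> \<le> sum (pair_weight N p p) (piv N)"
    using \<open>k \<in> piv N\<close> by (intro member_le_sum weight_p_nonneg) (auto simp: piv_def)
  finally show ?thesis .
qed

lemma G_eq: "G p c0 b1 N = (\<Sum>k\<in>piv N. pair_weight N p p k *
    gain_at b1 (count_mean p N (fst k)) (count_mean p N (snd k))) / sum (pair_weight N p p) (piv N)"
  unfolding piv_def using p_gt p_lt by (intro G_eq_sums) auto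

lemma G_dev_le:
  assumes N: "0 < N" "real (N + 1) * u < real N" and \<delta>: "0 < \<delta>" "2 * \<delta> \<le> \<tau>' - (u - v)"
  shows "\<bar>G p c0 b1 N - gain_at b1 lim_mean0 lim_mean1\<bar>
    \<le> lip * \<delta> + lip * (8 * (1 - u) / (\<rho> ^ 3 * u)) * ((1 + real N) ^ 3 * exp (- 2 * real N * \<delta>\<^sup>2))"
proof -
  let ?w = "pair_weight N p p"
  define L where "L = tilt_const N * (\<rho> ^ 3 * u / ((1 - u) * (1 + real N) ^ 3))"
  have L_pos: "0 < L"
    unfolding L_def using tilt_const_pos[of N] \<rho>_pos u_pos u_lt by simp
  have S_ge: "L \<le> sum ?w (piv N)"
    unfolding L_def by (rule sum_piv_ge[OF N])
  have "sum ?w (piv N \<inter> far N \<delta>) / sum ?w (piv N) \<le> 8 * tilt_const N * exp (- 2 * real N * \<delta>\<^sup>2) / L"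
    using sum_piv_far_le[OF N(1) _ \<delta>(2)] \<delta>(1) S_ge L_pos tilt_const_pos[of N]
    by (intro frac_le) (auto intro: sum_nonneg weight_p_nonneg)
  also have "\<dots> = 8 * (1 - u) / (\<rho> ^ 3 * u) * ((1 + real N) ^ 3 * exp (- 2 * real N * \<delta>\<^sup>2))"
    unfolding L_def using tilt_const_pos[of N] \<rho>_pos u_pos u_lt by (simp add: field_simps)
  finally have ratio: "sum ?w (piv N \<inter> far N \<delta>) / sum ?w (piv N) \<le> \<dots>" .
  have "\<bar>G p c0 b1 N - gain_at b1 lim_mean0 lim_mean1\<bar> \<le> lip * \<delta> + lip * sum ?w (piv N \<inter> far N \<delta>) / sum ?w (piv N)"
    unfolding G_eq
  proof (rule weighted_mean_dev_le)
    show "finite (piv N)" "0 < sum ?w (piv N)" "0 \<le> lip * \<delta>"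
      using S_ge L_pos lip_pos \<delta> by (auto simp: piv_def)
  next
    fix k assume "k \<in> piv N"
    then have "fst k \<le> N" "snd k \<le> N"
      by (auto simp: piv_def)
    moreover have "real (fst k) / real N \<in> {0..1}" "real (snd k) / real N \<in> {0..1}"
      using \<open>fst k \<le> N\<close> \<open>snd k \<le> N\<close> N(1) by auto
    then have "\<bar>real (fst k) / real N - u\<bar> \<le> 1" "\<bar>real (snd k) / real N - v\<bar> \<le> 1"
      using u_pos u_lt v_pos v_lt unfolding abs_le_iff atLeastAtMost_iff by linarith+
    ultimately show "\<bar>gain_at b1 (count_mean p N (fst k)) (count_mean p N (snd k)) - gain_at b1 lim_mean0 lim_mean1\<bar> \<le> lip"
      using gain_close[OF N(1), of "fst k" "snd k" 1] by simp
  next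
    fix k assume "k \<in> piv N - far N \<delta>"
    then show "\<bar>gain_at b1 (count_mean p N (fst k)) (count_mean p N (snd k)) - gain_at b1 lim_mean0 lim_mean1\<bar> \<le> lip * \<delta>"
      using gain_close[OF N(1)] by (auto simp: far_def piv_def)
  qed (rule weight_p_nonneg)
  also have "\<dots> \<le> lip * \<delta> + lip * (8 * (1 - u) / (\<rho> ^ 3 * u)) * ((1 + real N) ^ 3 * exp (- 2 * real N * \<delta>\<^sup>2))"
    using mult_left_mono[OF ratio, of lip] lip_pos by (simp add: mult.assoc)
  finally show ?thesis .
qed

theorem G_tendsto: "G p c0 b1 \<longlonglongrightarrow> gain_at b1 lim_mean0 lim_mean1"
proof (rule tendstoI)
  fix \<epsilon> :: real assume "0 < \<epsilon>"
  define \<delta> where "\<delta> = min ((\<tau>' - (u - v)) / 2) (\<epsilon> / (4 * lip))"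
  define K where "K = lip * (8 * (1 - u) / (\<rho> ^ 3 * u))"
  have \<delta>: "0 < \<delta>" "2 * \<delta> \<le> \<tau>' - (u - v)" "lip * \<delta> < \<epsilon> / 2"
    using shift_lt_\<tau>' \<open>0 < \<epsilon>\<close> lip_pos by (auto simp: \<delta>_def min_def field_simps)
  have "(\<lambda>N. (1 + real N) ^ 3 * exp (- 2 * real N * \<delta>\<^sup>2)) \<longlonglongrightarrow> 0"
    using \<delta>(1) by real_asymp
  then have "(\<lambda>N. K * ((1 + real N) ^ 3 * exp (- 2 * real N * \<delta>\<^sup>2))) \<longlonglongrightarrow> 0"
    by (rule tendsto_mult_right_zero)
  then have small: "\<forall>\<^sub>F N in sequentially. K * ((1 + real N) ^ 3 * exp (- 2 * real N * \<delta>\<^sup>2)) < \<epsilon> / 2"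
    using \<open>0 < \<epsilon>\<close> by (intro order_tendstoD) auto
  obtain M :: nat where "u / (1 - u) < real M"
    using reals_Archimedean2 by blast
  then have "u < real M * (1 - u)"
    using u_lt by (simp add: pos_divide_less_eq)
  have large: "\<forall>\<^sub>F N in sequentially. 0 < N \<and> real (N + 1) * u < real N"
    using eventually_ge_at_top[of "M + 1"]
  proof eventually_elim
    case (elim N)
    then have "real M * (1 - u) \<le> real N * (1 - u)"
      using u_lt by (intro mult_right_mono) auto
    then show ?case
      using elim \<open>u < real M * (1 - u)\<close> by (auto simp: algebra_simps)
  qed
  from small large show "\<forall>\<^sub>F N in sequentially. dist (G p c0 b1 N) (gain_at b1 lim_mean0 lim_mean1) < \<epsilon>"
  proof eventually_elim
    case (elim N)
    then have "\<bar>G p c0 b1 N - gain_at b1 lim_mean0 lim_mean1\<bar>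
        \<le> lip * \<delta> + K * ((1 + real N) ^ 3 * exp (- 2 * real N * \<delta>\<^sup>2))"
      using \<delta> by (intro G_dev_le[of N \<delta>, folded K_def]) auto
    then show ?case
      using elim \<delta>(3) unfolding dist_real_def by linarith
  qed
qed

lemma balanced_lim_means: "(d - 1) * lim_mean1 * lim_mean0 + d * (lim_mean1 + lim_mean0) = 0"
proof -
  have "p\<^sup>2 * ((1 - u) * (1 - v)) = u * v * (1 - p)\<^sup>2"
    using balanced u_pos v_pos p_lt unfolding odds_ratio_def by (simp add: field_simps power2_eq_square)
  moreover have "d\<^sup>2 * ((1 - u) * (1 - v)) = p\<^sup>2 * ((1 - u) * (1 - v)) / (1 - p)\<^sup>2"
    unfolding d_def dval_def by (simp add: power_divide)
  ultimately have "u * v = d\<^sup>2 * ((1 - u) * (1 - v))"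
    using p_lt by simp
  moreover have "(d - 1) * lim_mean1 * lim_mean0 + d * (lim_mean1 + lim_mean0)
      = (d + 1) * (d\<^sup>2 * ((1 - u) * (1 - v)) - u * v)"
    unfolding lim_mean0_def lim_mean1_def by (simp add: algebra_simps power2_eq_square)
  ultimately show ?thesis
    by simp
qed

lemma lim_gain_pos_iff: "0 < gain_at b1 lim_mean0 lim_mean1 \<longleftrightarrow> b1 < c0 / (sqrt (2 * c0) + 2 * d / (d - 1))"
proof (cases "sqrt (2 * c0) \<le> b1")
  case True
  then have "\<tau> \<le> 0"
    unfolding \<tau>_def using d_gt1 by (simp add: divide_le_0_iff)
  then have "u = p" "v = u"
    using \<rho>_eq1 shift_eq p_gt p_lt u_pos unfolding \<rho>_def odds_ratio_def by (auto simp: field_simps)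
  then have "gain_at b1 lim_mean0 lim_mean1 = - b1\<^sup>2"
    using p_lt unfolding gain_at_def lim_mean0_def lim_mean1_def d_def dval_def by (simp add: field_simps)
  have "c0 / (sqrt (2 * c0) + 2 * d / (d - 1)) < c0 / sqrt (2 * c0)"
    using c0_pos d_gt1 by (intro divide_strict_left_mono add_pos_pos mult_pos_pos) auto
  also have "c0 / sqrt (2 * c0) = sqrt (2 * c0) / 2"
    using c0_pos real_sqrt_mult_self[of "2 * c0"] by (simp add: field_simps)
  finally have "\<not> b1 < c0 / (sqrt (2 * c0) + 2 * d / (d - 1))"
    using True b1_pos by linarith
  with \<open>gain_at b1 lim_mean0 lim_mean1 = - b1\<^sup>2\<close> show ?thesis
    by simp
next
  case False
  then have "0 < \<tau>"
    unfolding \<tau>_def using d_gt1 by simp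
  then have "lim_mean1 - lim_mean0 = (d + 1) * \<tau>"
    using shift_eq unfolding lim_mean0_def lim_mean1_def by (simp add: algebra_simps)
  also have "\<dots> = sqrt (2 * c0) - b1"
    unfolding \<tau>_def using d_gt1 by simp
  finally have "lim_mean1 - lim_mean0 = sqrt (2 * c0) - b1" .
  then have "0 < gain_at b1 lim_mean0 lim_mean1
      \<longleftrightarrow> b1 < ((sqrt (2 * c0))\<^sup>2 / 2) / (sqrt (2 * c0) + 2 * d / (d - 1))"
    using c0_pos lim_means_range by (intro gain_at_pos_iff[OF d_gt1 _ b1_pos _ _ _ balanced_lim_means]) auto
  moreover have "(sqrt (2 * c0))\<^sup>2 / 2 = c0"
    using c0_pos by simp
  ultimately show ?thesis
    by simp
qed

end

theorem proposition3:
  fixes p c0 beta0 beta1 :: real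
  assumes "1/2 < p" and "p < 1"
    and "0 < c0" and "0 < beta1"
    and "-1 < (- sqrt (2 * c0) - beta1) / (dval p + 1)"
    and "(- sqrt (2 * c0) - beta1) / (dval p + 1) < (sqrt (2 * c0) - beta1) / (dval p + 1)"
    and "(sqrt (2 * c0) - beta1) / (dval p + 1) < 1"
  shows "\<exists>L. (G p c0 beta1 \<longlonglongrightarrow> L) \<and>
           (0 < L \<longleftrightarrow> beta1 < c0 / (sqrt (2 * c0) + 2 * dval p / (dval p - 1)))"
proof -
  define t where "t = max ((sqrt (2 * c0) - beta1) / (dval p + 1)) 0"
  have "0 \<le> t" "t < 1"
    using assms(7) by (auto simp: t_def)
  then obtain u where u: "t < u" "u < 1" "odds_ratio p u * odds_ratio p (u - t) = 1"
    using balanced_tilt_exists[of p t] assms(1,2) by auto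
  interpret tilted_pivotal p c0 beta1 u "u - t"
    using assms(1-4) u by unfold_locales (auto simp: t_def)
  show ?thesis
    using G_tendsto lim_gain_pos_iff unfolding d_def by blast
qed

end
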